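(* Let $p\ge1$, $m\in\mathbb{N}$, $a,b>0$, $\beta\in\mathbb{R}^p$, let $f=(1,f_1,\ldots,f_{p-1})^T$ be arbitrary regression functions on a design region $\mathcal{X}$, let $A$ be a real $p\times s$ matrix of rank $s$ and $B=AA^T$. Then a design $\xi^*$ is $L$-optimal (with respect to $B$) in the Poisson–Gamma model if and only if $\xi^*$ is $L$-optimal (with respect to $B$) in the Poisson model. In particular, for any $c\in\mathbb{R}^p\setminus\{0\}$, $\xi^*$ is $c$-optimal in the Poisson–Gamma model if and only if it is $c$-optimal in the Poisson model.
   Context: A design $\xi$ is a probability measure on $\mathcal{X}$ with finite support $x_1,\ldots,x_l$ and weights $w_1,\ldots,w_l\ge0$, $\sum_j w_j=1$. The Poisson information matrix is $M_{Po}(\xi;\beta)=\sum_{j=1}^l w_j\exp(f(x_j)^T\beta)f(x_j)f(x_j)^T$, and the Poisson–Gamma information matrix is $M(\xi;\beta)=\frac{a}{b}\Bigl(M_{Po}(\xi;\beta)-\frac{M_{Po}(\xi;\beta)e_1e_1^TM_{Po}(\xi;\beta)}{e_1^TM_{Po}(\xi;\beta)e_1+b/m}\Bigr)$, $e_1$ the first standard unit vector of $\mathbb{R}^p$. For a model with information matrix $N(\xi)$ (either $M$ or $M_{Po}$), $A^T\beta$ is identifiable for $\xi$ if $A=N(\xi)H$ for some $H\in\mathbb{R}^{p\times s}$. A design $\xi^*$ is $L$-optimal with respect to $B=AA^T$ if $A^T\beta$ is identifiable for $\xi^*$ and $\operatorname{tr}(N(\xi^* )^-B)\le\operatorname{tr}(N(\xi)^-B)$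 for all designs $\xi$ for which $A^T\beta$ is identifiable ($^-$ a generalized inverse). $c$-optimality is the special case $A=c$, $B=cc^T$, with criterion $c^TN(\xi)^-c$. *)

theory Defs
  imports "Jordan_Normal_Form.DL_Rank"
begin

definition supp_design :: "('x \<Rightarrow> real) \<Rightarrow> 'x set" where
  "supp_design w = {x. w x \<noteq> 0}"

definition is_design :: "'x set \<Rightarrow> ('x \<Rightarrow> real) \<Rightarrow> bool" where
  "is_design X w \<longleftrightarrow> finite (supp_design w) \<and> supp_design w \<subseteq> X
     \<and> (\<forall>x. 0 \<le> w x) \<and> (\<Sum>x\<in>supp_design w. w x) = 1"

definition M_Po :: "nat \<Rightarrow> ('x \<Rightarrow> real vec) \<Rightarrow> real vec \<Rightarrow> ('x \<Rightarrow> real) \<Rightarrow> real mat" where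
  "M_Po p f \<beta> w = mat p p (\<lambda>(i,j). \<Sum>x\<in>supp_design w. w x * exp (f x \<bullet> \<beta>) * (f x $ i) * (f x $ j))"

text \<open>Poisson-Gamma information matrix
  (a/b) (M_Po - M_Po e1 e1^T M_Po / (e1^T M_Po e1 + b/m)); index 0 is the first coordinate.\<close>
definition M_PG :: "nat \<Rightarrow> nat \<Rightarrow> real \<Rightarrow> real \<Rightarrow> ('x \<Rightarrow> real vec) \<Rightarrow> real vec \<Rightarrow> ('x \<Rightarrow> real) \<Rightarrow> real mat" where
  "M_PG p m a b f \<beta> w =
     (let M = M_Po p f \<beta> w; e1 = unit_vec p 0 in
      (a / b) \<cdot>\<^sub>m (M - (1 / (e1 \<bullet> (M *\<^sub>v e1) + b / real m)) \<cdot>\<^sub>m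
          ((M * mat_of_cols p [e1]) * (mat_of_rows p [e1] * M))))"

definition mat_trace :: "real mat \<Rightarrow> real" where
  "mat_trace C = (\<Sum>i<dim_row C. C $$ (i,i))"

definition g_inverse :: "nat \<Rightarrow> real mat \<Rightarrow> real mat \<Rightarrow> bool" where
  "g_inverse p N G \<longleftrightarrow> G \<in> carrier_mat p p \<and> N * G * N = N"

text \<open>A^T beta identifiable for N: A = N H for some p x s matrix H.\<close>
definition identifiable :: "nat \<Rightarrow> real mat \<Rightarrow> real mat \<Rightarrow> bool" where
  "identifiable p N A \<longleftrightarrow> (\<exists>H \<in> carrier_mat p (dim_col A). A = N * H)"

definition L_optimal :: "nat \<Rightarrow> 'x set \<Rightarrow> (('x \<Rightarrow> real) \<Rightarrow> real mat) \<Rightarrow> real mat \<Rightarrow> ('x \<Rightarrow> real) \<Rightarrow> bool" where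
  "L_optimal p X N A \<xi>s \<longleftrightarrow> is_design X \<xi>s \<and> identifiable p (N \<xi>s) A \<and>
     (\<forall>\<xi>. is_design X \<xi> \<and> identifiable p (N \<xi>) A \<longrightarrow>
        (\<forall>Gs G. g_inverse p (N \<xi>s) Gs \<longrightarrow> g_inverse p (N \<xi>) G \<longrightarrow>
           mat_trace (Gs * (A * A\<^sup>T)) \<le> mat_trace (G * (A * A\<^sup>T))))"

definition c_optimal :: "nat \<Rightarrow> 'x set \<Rightarrow> (('x \<Rightarrow> real) \<Rightarrow> real mat) \<Rightarrow> real vec \<Rightarrow> ('x \<Rightarrow> real) \<Rightarrow> bool" where
  "c_optimal p X N c \<xi>s \<longleftrightarrow> is_design X \<xi>s \<and> (\<exists>h \<in> carrier_vec p. c = N \<xi>s *\<^sub>v h) \<and>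
     (\<forall>\<xi>. is_design X \<xi> \<and> (\<exists>h \<in> carrier_vec p. c = N \<xi> *\<^sub>v h) \<longrightarrow>
        (\<forall>Gs G. g_inverse p (N \<xi>s) Gs \<longrightarrow> g_inverse p (N \<xi>) G \<longrightarrow>
           c \<bullet> (Gs *\<^sub>v c) \<le> c \<bullet> (G *\<^sub>v c)))"

end

theory Submission
  imports Defs
begin

text \<open>
  With \<open>R = e\<^sub>1 e\<^sub>1\<^sup>T\<close> and \<open>q = e\<^sub>1\<^sup>T M e\<^sub>1 \<ge> 0\<close> we have \<open>R R = R\<close> and
  \<open>R M R = q R\<close>, and the Poisson-Gamma information matrix is a positive multiple of the
  rank-one update \<open>N = M + t M R M\<close> of the Poisson information matrix \<open>M\<close>, with
  \<open>t = -1/(q + b/m)\<close>. For such updates, \<open>G \<mapsto> G - t/(1 + t q) R\<close> maps generalized inverses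
  of \<open>M\<close> to generalized inverses of \<open>N\<close>, and since \<open>M\<close> is in turn a rank-one update of \<open>N\<close>
  the map can be reversed; moreover \<open>M\<close> and \<open>N\<close> have the same column space. For this particular
  \<open>t\<close> the shift \<open>-t/(1 + t q) = m/b\<close> does not depend on the design, so the criteria
  \<open>tr(G A A\<^sup>T)\<close> and \<open>c\<^sup>T G c\<close> of the two models differ by a positive factor and a constant,
  and they have the same minimizers.
\<close>

text \<open>The ring laws for square matrices of a fixed dimension \<open>d\<close>: with \<open>d\<close> instantiated, the
  simplifier can discharge their carrier conditions, which stay schematic in the general laws.
  They bring matrix expressions into a right-associated normal form; identities between normal
  forms are then checked entrywise, keeping products as atoms (\<open>index_mult_mat(1)\<close> deleted).\<close>
lemmas square_mat_simps =
  mult_carrier_mat[where nr = d and n = d and nc = d]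
  add_carrier_mat[where nr = d and nc = d] minus_carrier_mat[where nr = d and nc = d]
  smult_carrier_mat[where nr = d and nc = d]
  assoc_mult_mat[where n\<^sub>1 = d and n\<^sub>2 = d and n\<^sub>3 = d and n\<^sub>4 = d]
  add_mult_distrib_mat[where nr = d and n = d and nc = d]
  mult_add_distrib_mat[where nr = d and n = d and nc = d]
  minus_mult_distrib_mat[where nr = d and n = d and nc = d]
  mult_minus_distrib_mat[where nr = d and n = d and nc = d]
  mult_smult_assoc_mat[where nr = d and n = d and nc = d]
  mult_smult_distrib[where nr = d and n = d and nc = d]
  add_smult_distrib_left_mat[where nr = d and nc = d]
  for d :: nat

lemma smult_smult_mat: "a \<cdot>\<^sub>m (b \<cdot>\<^sub>m A) = (a * b) \<cdot>\<^sub>m (A :: 'a :: semigroup_mult mat)"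
  by (rule eq_matI) (auto simp: mult.assoc)

lemma one_smult_mat [simp]: "1 \<cdot>\<^sub>m A = (A :: 'a :: monoid_mult mat)"
  by (rule eq_matI) auto

lemma smult_mult_smult_inverse:
  fixes A B :: "real mat"
  assumes "A \<in> carrier_mat nr n" "B \<in> carrier_mat n nc" "c \<noteq> 0"
  shows "(c \<cdot>\<^sub>m A) * ((1 / c) \<cdot>\<^sub>m B) = A * B"
proof -
  have "(c \<cdot>\<^sub>m A) * ((1 / c) \<cdot>\<^sub>m B) = c \<cdot>\<^sub>m (A * ((1 / c) \<cdot>\<^sub>m B))"
    using assms by (intro mult_smult_assoc_mat) auto
  also have "\<dots> = c \<cdot>\<^sub>m ((1 / c) \<cdot>\<^sub>m (A * B))"
    using mult_smult_distrib[OF assms(1,2)] by simp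
  finally show ?thesis
    using assms(3) by (simp add: smult_smult_mat)
qed

lemma sandwich_add_smult:
  fixes N G R :: "real mat"
  assumes "N \<in> carrier_mat p p" "G \<in> carrier_mat p p" "R \<in> carrier_mat p p"
  shows "N * (G + s \<cdot>\<^sub>m R) * N = N * G * N + s \<cdot>\<^sub>m (N * R * N)"
  using assms by (simp add: square_mat_simps[where d = p])

lemma rank_one_update_eq_mult:
  fixes M R :: "real mat"
  assumes "M \<in> carrier_mat p p" "R \<in> carrier_mat p p"
  shows "M + t \<cdot>\<^sub>m (M * R * M) = M * (1\<^sub>m p + t \<cdot>\<^sub>m (R * M))"
  using assms by (simp add: square_mat_simps[where d = p])

lemma g_inverse_smult:
  assumes N: "N \<in> carrier_mat p p" and c: "c \<noteq> 0" and G: "g_inverse p N G"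
  shows "g_inverse p (c \<cdot>\<^sub>m N) ((1 / c) \<cdot>\<^sub>m G)"
proof -
  have Gc: "G \<in> carrier_mat p p" and NGN: "N * G * N = N"
    using G by (auto simp: g_inverse_def)
  have "c \<cdot>\<^sub>m N * ((1 / c) \<cdot>\<^sub>m G) * (c \<cdot>\<^sub>m N) = c \<cdot>\<^sub>m (N * G * N)"
    using N Gc c
    by (simp add: square_mat_simps[where d = p]) (rule eq_matI; simp del: index_mult_mat(1))
  then show ?thesis
    using Gc NGN by (simp add: g_inverse_def)
qed

section \<open>Rank-one updates\<close>

context
  fixes p :: nat and M R :: "real mat" and q :: real
  assumes M: "M \<in> carrier_mat p p" and R: "R \<in> carrier_mat p p"
    and R_idem: "R * R = R" and R_M_R: "R * M * R = q \<cdot>\<^sub>m R"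
begin

lemma R_mult_R_mult: "X \<in> carrier_mat p p \<Longrightarrow> R * (R * X) = R * X"
  using R by (simp add: assoc_mult_mat[of R p p R p X p, symmetric] R_idem)

lemma R_M_R_right: "R * (M * R) = q \<cdot>\<^sub>m R"
  using M R R_M_R by simp

lemma R_M_R_mult: "X \<in> carrier_mat p p \<Longrightarrow> R * (M * (R * X)) = q \<cdot>\<^sub>m (R * X)"
proof -
  assume X: "X \<in> carrier_mat p p"
  then have "R * (M * (R * X)) = R * M * R * X"
    using M R by (simp add: square_mat_simps[where d = p])
  then show ?thesis
    using R X by (simp add: R_M_R mult_smult_assoc_mat)
qed

lemma rank_one_update_sandwich_R:
  "(M + t \<cdot>\<^sub>m (M * R * M)) * R * (M + t \<cdot>\<^sub>m (M * R * M)) = (1 + t * q)\<^sup>2 \<cdot>\<^sub>m (M * R * M)"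
  using M R
  by (simp add: square_mat_simps[where d = p] R_mult_R_mult R_M_R_mult)
    (rule eq_matI; simp add: algebra_simps power2_eq_square del: index_mult_mat(1))

lemma rank_one_update_sandwich_ginverse:
  assumes "g_inverse p M G"
  shows "(M + t \<cdot>\<^sub>m (M * R * M)) * G * (M + t \<cdot>\<^sub>m (M * R * M))
    = M + (2 * t + t * t * q) \<cdot>\<^sub>m (M * R * M)"
proof -
  have G: "G \<in> carrier_mat p p" and MGM: "M * (G * M) = M"
    using assms M by (auto simp: g_inverse_def)
  have MGM_mult: "M * (G * (M * X)) = M * X" if "X \<in> carrier_mat p p" for X
  proof -
    have "M * (G * (M * X)) = M * (G * M) * X"
      using M G that by (simp add: square_mat_simps[where d = p])
    then show ?thesis by (simp add: MGM)
  qed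
  show ?thesis
    using M R G
    by (simp add: square_mat_simps[where d = p] R_M_R_mult MGM MGM_mult)
      (rule eq_matI; simp add: algebra_simps del: index_mult_mat(1))
qed

lemma g_inverse_rank_one_update:
  assumes G: "g_inverse p M G" and nz: "1 + t * q \<noteq> 0"
  shows "g_inverse p (M + t \<cdot>\<^sub>m (M * R * M)) (G + (- t / (1 + t * q)) \<cdot>\<^sub>m R)"
proof -
  let ?N = "M + t \<cdot>\<^sub>m (M * R * M)" and ?s = "- t / (1 + t * q)"
  have Gc: "G \<in> carrier_mat p p" using G by (simp add: g_inverse_def)
  have "?N * (G + ?s \<cdot>\<^sub>m R) * ?N = ?N * G * ?N + ?s \<cdot>\<^sub>m (?N * R * ?N)"
    using M R Gc by (intro sandwich_add_smult) auto
  also have "\<dots> = M + (2 * t + t * t * q + ?s * (1 + t * q)\<^sup>2) \<cdot>\<^sub>m (M * R * M)"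
    unfolding rank_one_update_sandwich_ginverse[OF G] rank_one_update_sandwich_R using M R
    by (intro eq_matI) (auto simp: algebra_simps simp del: index_mult_mat(1))
  also have "2 * t + t * t * q + ?s * (1 + t * q)\<^sup>2 = t"
    using nz by (simp add: power2_eq_square field_simps)
  finally show ?thesis
    using Gc R by (simp add: g_inverse_def)
qed

lemma R_sandwich_rank_one_update:
  "R * (M + t \<cdot>\<^sub>m (M * R * M)) * R = (q * (1 + t * q)) \<cdot>\<^sub>m R"
  using M R
  by (simp add: square_mat_simps[where d = p] R_mult_R_mult R_M_R_mult R_M_R_right)
    (rule eq_matI; simp add: algebra_simps del: index_mult_mat(1))

lemma rank_one_update_cancel:
  assumes "1 + t * q \<noteq> 0"
  shows "M = (M + t \<cdot>\<^sub>m (M * R * M))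
    + (- t / (1 + t * q)\<^sup>2) \<cdot>\<^sub>m ((M + t \<cdot>\<^sub>m (M * R * M)) * R * (M + t \<cdot>\<^sub>m (M * R * M)))"
  unfolding rank_one_update_sandwich_R using M R assms
  by (intro eq_matI) (auto simp: field_simps simp del: index_mult_mat(1))

end

lemma g_inverse_of_rank_one_update:
  fixes M R :: "real mat"
  assumes M: "M \<in> carrier_mat p p" and R: "R \<in> carrier_mat p p"
    and R_idem: "R * R = R" and R_M_R: "R * M * R = q \<cdot>\<^sub>m R"
    and nz: "1 + t * q \<noteq> 0" and G: "g_inverse p (M + t \<cdot>\<^sub>m (M * R * M)) G"
  shows "g_inverse p M (G + (t / (1 + t * q)) \<cdot>\<^sub>m R)"
proof -
  let ?N = "M + t \<cdot>\<^sub>m (M * R * M)"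
  define t' where "t' = - t / (1 + t * q)\<^sup>2"
  have N: "?N \<in> carrier_mat p p" using M R by simp
  have "t' * (q * (1 + t * q)) = - (t * q) / (1 + t * q)"
    using nz by (simp add: t'_def power2_eq_square)
  then have "1 + t' * (q * (1 + t * q)) = 1 / (1 + t * q)"
    using nz by (simp add: field_simps)
  then have nz': "1 + t' * (q * (1 + t * q)) \<noteq> 0"
    and coeff: "- t' / (1 + t' * (q * (1 + t * q))) = t / (1 + t * q)"
    using nz by (simp_all add: t'_def power2_eq_square)
  have "g_inverse p (?N + t' \<cdot>\<^sub>m (?N * R * ?N)) (G + (- t' / (1 + t' * (q * (1 + t * q)))) \<cdot>\<^sub>m R)"
    using g_inverse_rank_one_update[OF N R R_idem R_sandwich_rank_one_update[OF M R R_idem R_M_R] G nz'] .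
  moreover have "?N + t' \<cdot>\<^sub>m (?N * R * ?N) = M"
    unfolding t'_def by (rule rank_one_update_cancel[OF M R R_idem R_M_R nz, symmetric])
  ultimately show ?thesis
    unfolding coeff by simp
qed

section \<open>Column spaces and the optimality criteria\<close>

definition same_column_space :: "nat \<Rightarrow> real mat \<Rightarrow> real mat \<Rightarrow> bool" where
  "same_column_space p M N \<longleftrightarrow> M \<in> carrier_mat p p \<and> N \<in> carrier_mat p p
     \<and> (\<exists>T \<in> carrier_mat p p. N = M * T) \<and> (\<exists>S \<in> carrier_mat p p. M = N * S)"

lemma same_column_space_sym: "same_column_space p M N \<Longrightarrow> same_column_space p N M"
  unfolding same_column_space_def by blast

lemma identifiable_mult_right:
  assumes "M \<in> carrier_mat p p" "T \<in> carrier_mat p p" "identifiable p (M * T) A"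
  shows "identifiable p M A"
proof -
  obtain H where H: "H \<in> carrier_mat p (dim_col A)" and A_eq: "A = M * T * H"
    using assms(3) unfolding identifiable_def by blast
  have "A = M * (T * H)" using A_eq assoc_mult_mat[OF assms(1,2) H] by (rule trans)
  moreover have "T * H \<in> carrier_mat p (dim_col A)" using assms(2) H by simp
  ultimately show ?thesis unfolding identifiable_def by (intro bexI[of _ "T * H"])
qed

lemma range_mult_right:
  assumes "M \<in> carrier_mat p p" "T \<in> carrier_mat p p" "\<exists>h \<in> carrier_vec p. c = M * T *\<^sub>v h"
  shows "\<exists>h \<in> carrier_vec p. c = M *\<^sub>v h"
proof -
  obtain h where h: "h \<in> carrier_vec p" and c_eq: "c = M * T *\<^sub>v h"
    using assms(3) by blast
  have "c = M *\<^sub>v (T *\<^sub>v h)" using c_eq assoc_mult_mat_vec[OF assms(1,2) h] by (rule trans)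
  moreover have "T *\<^sub>v h \<in> carrier_vec p" using assms(2) h by simp
  ultimately show ?thesis by (intro bexI[of _ "T *\<^sub>v h"])
qed

lemma same_column_spaceE:
  assumes "same_column_space p M N"
  obtains T S where "M \<in> carrier_mat p p" "N \<in> carrier_mat p p"
    "T \<in> carrier_mat p p" "S \<in> carrier_mat p p" "N = M * T" "M = N * S"
  using assms unfolding same_column_space_def by blast

lemma same_column_space_identifiable_iff:
  assumes "same_column_space p M N"
  shows "identifiable p M A \<longleftrightarrow> identifiable p N A"
proof -
  obtain T S where M: "M \<in> carrier_mat p p" and N: "N \<in> carrier_mat p p"
    and T: "T \<in> carrier_mat p p" and S: "S \<in> carrier_mat p p" and NT: "N = M * T" and MS: "M = N * S"
    using assms by (rule same_column_spaceE)
  show ?thesis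
    using identifiable_mult_right[OF N S, folded MS] identifiable_mult_right[OF M T, folded NT] by blast
qed

lemma same_column_space_range_iff:
  assumes "same_column_space p M N"
  shows "(\<exists>h \<in> carrier_vec p. c = M *\<^sub>v h) \<longleftrightarrow> (\<exists>h \<in> carrier_vec p. c = N *\<^sub>v h)"
proof -
  obtain T S where M: "M \<in> carrier_mat p p" and N: "N \<in> carrier_mat p p"
    and T: "T \<in> carrier_mat p p" and S: "S \<in> carrier_mat p p" and NT: "N = M * T" and MS: "M = N * S"
    using assms by (rule same_column_spaceE)
  show ?thesis
    using range_mult_right[OF N S, folded MS] range_mult_right[OF M T, folded NT] by blast
qed

lemma same_column_space_rank_one_update:
  fixes M R :: "real mat"
  assumes M: "M \<in> carrier_mat p p" and R: "R \<in> carrier_mat p p"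
    and R_idem: "R * R = R" and R_M_R: "R * M * R = q \<cdot>\<^sub>m R"
    and nz: "1 + t * q \<noteq> 0" and c: "c \<noteq> 0"
  shows "same_column_space p M (c \<cdot>\<^sub>m (M + t \<cdot>\<^sub>m (M * R * M)))"
proof -
  let ?N = "M + t \<cdot>\<^sub>m (M * R * M)"
  let ?t' = "- t / (1 + t * q)\<^sup>2"
  let ?T = "c \<cdot>\<^sub>m (1\<^sub>m p + t \<cdot>\<^sub>m (R * M))"
  let ?S = "(1 / c) \<cdot>\<^sub>m (1\<^sub>m p + ?t' \<cdot>\<^sub>m (R * ?N))"
  have N: "?N \<in> carrier_mat p p" using M R by simp
  have NT: "c \<cdot>\<^sub>m ?N = M * ?T"
    unfolding rank_one_update_eq_mult[OF M R] using M R by (intro mult_smult_distrib[symmetric]) auto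
  have MS: "M = c \<cdot>\<^sub>m ?N * ?S"
  proof -
    have "M = ?N * (1\<^sub>m p + ?t' \<cdot>\<^sub>m (R * ?N))"
      using rank_one_update_cancel[OF M R R_idem R_M_R nz] rank_one_update_eq_mult[OF N R] by simp
    also have "\<dots> = c \<cdot>\<^sub>m ?N * ?S"
      using N R c by (intro smult_mult_smult_inverse[symmetric]) auto
    finally show ?thesis .
  qed
  have T: "?T \<in> carrier_mat p p" and S: "?S \<in> carrier_mat p p"
    using M R by auto
  show ?thesis
    unfolding same_column_space_def
    by (intro conjI smult_carrier_mat M N bexI[of _ ?T] bexI[of _ ?S] NT MS T S)
qed

lemma mat_trace_lincomb_mult:
  fixes G R B :: "real mat"
  assumes "G \<in> carrier_mat p p" "R \<in> carrier_mat p p" "B \<in> carrier_mat p p"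
  shows "mat_trace ((x \<cdot>\<^sub>m G + y \<cdot>\<^sub>m R) * B) = x * mat_trace (G * B) + y * mat_trace (R * B)"
proof -
  have "(x \<cdot>\<^sub>m G + y \<cdot>\<^sub>m R) * B = x \<cdot>\<^sub>m (G * B) + y \<cdot>\<^sub>m (R * B)"
    using assms by (simp add: square_mat_simps[where d = p])
  then show ?thesis
    using assms by (simp add: mat_trace_def sum.distrib sum_distrib_left del: index_mult_mat(1))
qed

lemma quadratic_form_lincomb:
  fixes G R :: "real mat"
  assumes "G \<in> carrier_mat p p" "R \<in> carrier_mat p p" "c \<in> carrier_vec p"
  shows "c \<bullet> ((x \<cdot>\<^sub>m G + y \<cdot>\<^sub>m R) *\<^sub>v c) = x * (c \<bullet> (G *\<^sub>v c)) + y * (c \<bullet> (R *\<^sub>v c))"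
  using assms by (simp add: scalar_prod_def sum.distrib sum_distrib_left algebra_simps)

lemma L_optimal_transfer:
  fixes N N' :: "('x \<Rightarrow> real) \<Rightarrow> real mat"
  assumes A: "A \<in> carrier_mat p s" and R: "R \<in> carrier_mat p p" and x: "0 < x"
    and col: "\<And>w. is_design X w \<Longrightarrow> same_column_space p (N w) (N' w)"
    and ginv: "\<And>w G. is_design X w \<Longrightarrow> g_inverse p (N w) G \<Longrightarrow> g_inverse p (N' w) (x \<cdot>\<^sub>m G + y \<cdot>\<^sub>m R)"
    and opt: "L_optimal p X N' A \<xi>s"
  shows "L_optimal p X N A \<xi>s"
  unfolding L_optimal_def
proof (intro conjI allI impI)
  show des: "is_design X \<xi>s" using opt by (simp add: L_optimal_def)
  show "identifiable p (N \<xi>s) A"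
    using opt col[OF des] by (simp add: L_optimal_def same_column_space_identifiable_iff)
  fix \<xi> Gs G
  assume \<xi>: "is_design X \<xi> \<and> identifiable p (N \<xi>) A"
    and Gs: "g_inverse p (N \<xi>s) Gs" and G: "g_inverse p (N \<xi>) G"
  have "identifiable p (N' \<xi>) A"
    using \<xi> same_column_space_identifiable_iff[OF col] by blast
  then have "mat_trace ((x \<cdot>\<^sub>m Gs + y \<cdot>\<^sub>m R) * (A * A\<^sup>T)) \<le> mat_trace ((x \<cdot>\<^sub>m G + y \<cdot>\<^sub>m R) * (A * A\<^sup>T))"
    using opt \<xi> ginv[OF des Gs] ginv[OF _ G] unfolding L_optimal_def by blast
  moreover have "Gs \<in> carrier_mat p p" "G \<in> carrier_mat p p" "A * A\<^sup>T \<in> carrier_mat p p"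
    using Gs G A by (auto simp: g_inverse_def)
  ultimately show "mat_trace (Gs * (A * A\<^sup>T)) \<le> mat_trace (G * (A * A\<^sup>T))"
    using x R by (simp add: mat_trace_lincomb_mult)
qed

lemma c_optimal_transfer:
  fixes N N' :: "('x \<Rightarrow> real) \<Rightarrow> real mat"
  assumes c: "c \<in> carrier_vec p" and R: "R \<in> carrier_mat p p" and x: "0 < x"
    and col: "\<And>w. is_design X w \<Longrightarrow> same_column_space p (N w) (N' w)"
    and ginv: "\<And>w G. is_design X w \<Longrightarrow> g_inverse p (N w) G \<Longrightarrow> g_inverse p (N' w) (x \<cdot>\<^sub>m G + y \<cdot>\<^sub>m R)"
    and opt: "c_optimal p X N' c \<xi>s"
  shows "c_optimal p X N c \<xi>s"
  unfolding c_optimal_def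
proof (intro conjI allI impI)
  show des: "is_design X \<xi>s" using opt by (simp add: c_optimal_def)
  show "\<exists>h \<in> carrier_vec p. c = N \<xi>s *\<^sub>v h"
    using opt col[OF des] by (simp add: c_optimal_def same_column_space_range_iff)
  fix \<xi> Gs G
  assume \<xi>: "is_design X \<xi> \<and> (\<exists>h \<in> carrier_vec p. c = N \<xi> *\<^sub>v h)"
    and Gs: "g_inverse p (N \<xi>s) Gs" and G: "g_inverse p (N \<xi>) G"
  have "\<exists>h \<in> carrier_vec p. c = N' \<xi> *\<^sub>v h"
    using \<xi> same_column_space_range_iff[OF col] by blast
  then have "c \<bullet> ((x \<cdot>\<^sub>m Gs + y \<cdot>\<^sub>m R) *\<^sub>v c) \<le> c \<bullet> ((x \<cdot>\<^sub>m G + y \<cdot>\<^sub>m R) *\<^sub>v c)"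
    using opt \<xi> ginv[OF des Gs] ginv[OF _ G] unfolding c_optimal_def by blast
  moreover have "Gs \<in> carrier_mat p p" "G \<in> carrier_mat p p"
    using Gs G by (auto simp: g_inverse_def)
  ultimately show "c \<bullet> (Gs *\<^sub>v c) \<le> c \<bullet> (G *\<^sub>v c)"
    using x R c by (simp add: quadratic_form_lincomb)
qed

section \<open>The Poisson and Poisson-Gamma information matrices\<close>

lemma mat_of_rows_mult_mat_of_cols:
  fixes v w :: "real vec"
  assumes v: "v \<in> carrier_vec n" and A: "A \<in> carrier_mat n n" and w: "w \<in> carrier_vec n"
  shows "mat_of_rows n [v] * A * mat_of_cols n [w] = (v \<bullet> (A *\<^sub>v w)) \<cdot>\<^sub>m 1\<^sub>m 1"
proof -
  have assoc: "mat_of_rows n [v] * A * mat_of_cols n [w] = mat_of_rows n [v] * (A * mat_of_cols n [w])"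
    using A by (intro assoc_mult_mat) auto
  have W: "mat_of_cols n [w] \<in> carrier_mat n 1"
    using mat_of_cols_carrier(1)[of n "[w]"] by simp
  have "col (A * mat_of_cols n [w]) 0 = A *\<^sub>v w"
    using col_mult2[OF A W, of 0] w by simp
  then have "(mat_of_rows n [v] * (A * mat_of_cols n [w])) $$ (0, 0) = v \<bullet> (A *\<^sub>v w)"
    using A v by simp
  then show ?thesis
    unfolding assoc using A by (intro eq_matI) auto
qed

lemma outer_sandwich:
  fixes v :: "real vec"
  assumes v: "v \<in> carrier_vec n" and A: "A \<in> carrier_mat n n"
  shows "mat_of_cols n [v] * mat_of_rows n [v] * A * (mat_of_cols n [v] * mat_of_rows n [v])
    = (v \<bullet> (A *\<^sub>v v)) \<cdot>\<^sub>m (mat_of_cols n [v] * mat_of_rows n [v])"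
proof -
  let ?C = "mat_of_cols n [v]" and ?V = "mat_of_rows n [v]"
  have C: "?C \<in> carrier_mat n 1" and V: "?V \<in> carrier_mat 1 n"
    using mat_of_cols_carrier(1)[of n "[v]"] mat_of_rows_carrier(1)[of n "[v]"] by simp_all
  have VA: "?V * A \<in> carrier_mat 1 n" using V A by simp
  have "?C * ?V * A * (?C * ?V) = ?C * ((?V * A * ?C) * ?V)"
    using assoc_mult_mat[OF C V A] assoc_mult_mat[OF C VA mult_carrier_mat[OF C V]]
      assoc_mult_mat[OF VA C V] by simp
  also have "\<dots> = ?C * (((v \<bullet> (A *\<^sub>v v)) \<cdot>\<^sub>m 1\<^sub>m 1) * ?V)"
    using mat_of_rows_mult_mat_of_cols[OF v A v] by simp
  also have "\<dots> = (v \<bullet> (A *\<^sub>v v)) \<cdot>\<^sub>m (?C * ?V)"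
    using C V by (simp add: mult_smult_assoc_mat[of _ 1 1] mult_smult_distrib)
  finally show ?thesis .
qed

definition proj_e1 :: "nat \<Rightarrow> real mat" where
  "proj_e1 p = mat_of_cols p [unit_vec p 0] * mat_of_rows p [unit_vec p 0]"

lemma proj_e1_carrier: "proj_e1 p \<in> carrier_mat p p"
  using mat_of_cols_carrier(1)[of p "[unit_vec p 0]"] mat_of_rows_carrier(1)[of p "[unit_vec p 0]"]
  unfolding proj_e1_def by (intro mult_carrier_mat) simp_all

lemma proj_e1_sandwich:
  assumes "1 \<le> p" and "A \<in> carrier_mat p p"
  shows "proj_e1 p * A * proj_e1 p = A $$ (0, 0) \<cdot>\<^sub>m proj_e1 p"
proof -
  have "unit_vec p 0 \<bullet> (A *\<^sub>v unit_vec p 0) = A $$ (0, 0)"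
    using assms by simp
  then show ?thesis
    using outer_sandwich[of "unit_vec p 0" p A, folded proj_e1_def] assms(2) by simp
qed

lemma proj_e1_idem:
  assumes "1 \<le> p"
  shows "proj_e1 p * proj_e1 p = proj_e1 p"
  using proj_e1_sandwich[OF assms one_carrier_mat] proj_e1_carrier[of p] assms by simp

lemma M_Po_carrier: "M_Po p f \<beta> w \<in> carrier_mat p p"
  by (simp add: M_Po_def)

lemma M_Po_corner_nonneg:
  assumes "is_design X w" and "1 \<le> p"
  shows "0 \<le> M_Po p f \<beta> w $$ (0, 0)"
proof -
  have "M_Po p f \<beta> w $$ (0, 0) = (\<Sum>x\<in>supp_design w. w x * exp (f x \<bullet> \<beta>) * (f x $ 0)\<^sup>2)"
    using assms(2) by (simp add: M_Po_def power2_eq_square mult.assoc)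
  also have "\<dots> \<ge> 0"
    using assms(1) unfolding is_design_def by (intro sum_nonneg) simp
  finally show ?thesis .
qed

lemma M_PG_eq_rank_one_update:
  assumes "1 \<le> p"
  shows "M_PG p m a b f \<beta> w = (a / b) \<cdot>\<^sub>m (M_Po p f \<beta> w
    + (- 1 / (M_Po p f \<beta> w $$ (0, 0) + b / m)) \<cdot>\<^sub>m (M_Po p f \<beta> w * proj_e1 p * M_Po p f \<beta> w))"
proof -
  let ?M = "M_Po p f \<beta> w" and ?C = "mat_of_cols p [unit_vec p 0]" and ?V = "mat_of_rows p [unit_vec p 0]"
  have M: "?M \<in> carrier_mat p p" by (rule M_Po_carrier)
  have C: "?C \<in> carrier_mat p 1" and V: "?V \<in> carrier_mat 1 p"
    using mat_of_cols_carrier(1)[of p "[unit_vec p 0]"] mat_of_rows_carrier(1)[of p "[unit_vec p 0]"]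
    by simp_all
  have corner: "unit_vec p 0 \<bullet> (?M *\<^sub>v unit_vec p 0) = ?M $$ (0, 0)"
    using M assms by simp
  have "?M * ?C * (?V * ?M) = ?M * proj_e1 p * ?M"
    unfolding proj_e1_def
    using assoc_mult_mat[OF M C mult_carrier_mat[OF V M]] assoc_mult_mat[OF M mult_carrier_mat[OF C V] M]
      assoc_mult_mat[OF C V M] by simp
  moreover have "?M - s \<cdot>\<^sub>m X = ?M + (- s) \<cdot>\<^sub>m X" if "X \<in> carrier_mat p p" for s X
    using M that by (intro eq_matI) auto
  ultimately show ?thesis
    using M proj_e1_carrier[of p] unfolding M_PG_def Let_def corner by simp
qed

lemma downdate_coefficients:
  fixes q k :: real
  assumes "0 \<le> q" and "0 < k"
  shows "1 + (- 1 / (q + k)) * q \<noteq> 0"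
    and "- (- 1 / (q + k)) / (1 + (- 1 / (q + k)) * q) = 1 / k"
    and "(- 1 / (q + k)) / (1 + (- 1 / (q + k)) * q) = - 1 / k"
proof -
  have "1 + (- 1 / (q + k)) * q = k / (q + k)"
    using assms by (simp add: field_simps)
  then show "1 + (- 1 / (q + k)) * q \<noteq> 0"
    and "- (- 1 / (q + k)) / (1 + (- 1 / (q + k)) * q) = 1 / k"
    and "(- 1 / (q + k)) / (1 + (- 1 / (q + k)) * q) = - 1 / k"
    using assms by (simp_all add: field_simps)
qed

context
  fixes p m :: nat and a b :: real and f :: "'x \<Rightarrow> real vec" and \<beta> :: "real vec"
    and X :: "'x set" and w :: "'x \<Rightarrow> real"
  assumes p: "1 \<le> p" and m: "1 \<le> m" and a: "0 < a" and b: "0 < b" and w: "is_design X w"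
begin

lemma g_inverse_M_PG_of_M_Po:
  assumes G: "g_inverse p (M_Po p f \<beta> w) G"
  shows "g_inverse p (M_PG p m a b f \<beta> w) ((b / a) \<cdot>\<^sub>m G + (m / a) \<cdot>\<^sub>m proj_e1 p)"
proof -
  let ?M = "M_Po p f \<beta> w" and ?R = "proj_e1 p" and ?q = "M_Po p f \<beta> w $$ (0, 0)"
  let ?t = "- 1 / (?q + b / m)"
  have M: "?M \<in> carrier_mat p p" and R: "?R \<in> carrier_mat p p" and Gc: "G \<in> carrier_mat p p"
    using M_Po_carrier proj_e1_carrier G by (auto simp: g_inverse_def)
  have q: "0 \<le> ?q" using M_Po_corner_nonneg[OF w p] .
  have k: "0 < b / m" using b m by simp
  have "g_inverse p (?M + ?t \<cdot>\<^sub>m (?M * ?R * ?M)) (G + (1 / (b / m)) \<cdot>\<^sub>m ?R)"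
    using g_inverse_rank_one_update[OF M R proj_e1_idem[OF p] proj_e1_sandwich[OF p M] G
        downdate_coefficients(1)[OF q k]]
    unfolding downdate_coefficients(2)[OF q k] .
  then have "g_inverse p (M_PG p m a b f \<beta> w) ((1 / (a / b)) \<cdot>\<^sub>m (G + (1 / (b / m)) \<cdot>\<^sub>m ?R))"
    unfolding M_PG_eq_rank_one_update[OF p] using a b M R by (intro g_inverse_smult) auto
  moreover have "(1 / (a / b)) \<cdot>\<^sub>m (G + (1 / (b / m)) \<cdot>\<^sub>m ?R) = (b / a) \<cdot>\<^sub>m G + (m / a) \<cdot>\<^sub>m ?R"
    using Gc R a b by (intro eq_matI) (auto simp: field_simps)
  ultimately show ?thesis by simp
qed

lemma g_inverse_M_Po_of_M_PG:
  assumes G: "g_inverse p (M_PG p m a b f \<beta> w) G"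
  shows "g_inverse p (M_Po p f \<beta> w) ((a / b) \<cdot>\<^sub>m G + (- m / b) \<cdot>\<^sub>m proj_e1 p)"
proof -
  let ?M = "M_Po p f \<beta> w" and ?R = "proj_e1 p" and ?q = "M_Po p f \<beta> w $$ (0, 0)"
  let ?t = "- 1 / (?q + b / m)"
  let ?N = "?M + ?t \<cdot>\<^sub>m (?M * ?R * ?M)"
  have M: "?M \<in> carrier_mat p p" and R: "?R \<in> carrier_mat p p"
    using M_Po_carrier proj_e1_carrier by auto
  have N: "?N \<in> carrier_mat p p" using M R by simp
  have q: "0 \<le> ?q" using M_Po_corner_nonneg[OF w p] .
  have k: "0 < b / m" using b m by simp
  have "g_inverse p ((b / a) \<cdot>\<^sub>m ((a / b) \<cdot>\<^sub>m ?N)) ((1 / (b / a)) \<cdot>\<^sub>m G)"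
    using G unfolding M_PG_eq_rank_one_update[OF p] using a b N by (intro g_inverse_smult) auto
  then have "g_inverse p ?N ((a / b) \<cdot>\<^sub>m G)"
    using a b by (simp add: smult_smult_mat)
  from g_inverse_of_rank_one_update[OF M R proj_e1_idem[OF p] proj_e1_sandwich[OF p M]
      downdate_coefficients(1)[OF q k] this]
  have "g_inverse p ?M ((a / b) \<cdot>\<^sub>m G + (- 1 / (b / m)) \<cdot>\<^sub>m ?R)"
    unfolding downdate_coefficients(3)[OF q k] .
  then show ?thesis by simp
qed

lemma same_column_space_M_Po_M_PG:
  "same_column_space p (M_Po p f \<beta> w) (M_PG p m a b f \<beta> w)"
proof -
  have q: "0 \<le> M_Po p f \<beta> w $$ (0, 0)" using M_Po_corner_nonneg[OF w p] .
  have k: "0 < b / m" using b m by simp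
  show ?thesis
    unfolding M_PG_eq_rank_one_update[OF p] using a b
    by (intro same_column_space_rank_one_update[OF M_Po_carrier proj_e1_carrier proj_e1_idem[OF p]
          proj_e1_sandwich[OF p M_Po_carrier] downdate_coefficients(1)[OF q k]]) auto
qed

end

theorem theorem11:
  fixes p m s :: nat and a b :: real and \<beta> :: "real vec" and X :: "'x set"
    and f :: "'x \<Rightarrow> real vec" and A :: "real mat" and \<xi>s :: "'x \<Rightarrow> real"
  assumes "p \<ge> 1" and "m \<ge> 1" and "a > 0" and "b > 0"
    and "\<beta> \<in> carrier_vec p"
    and "\<And>x. x \<in> X \<Longrightarrow> f x \<in> carrier_vec p \<and> f x $ 0 = 1"
    and "A \<in> carrier_mat p s" and "vec_space.rank p A = s"
  shows "(L_optimal p X (M_PG p m a b f \<beta>) A \<xi>s \<longleftrightarrow> L_optimal p X (M_Po p f \<beta>) A \<xi>s)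
    \<and> (\<forall>c \<in> carrier_vec p. c \<noteq> 0\<^sub>v p \<longrightarrow>
         (c_optimal p X (M_PG p m a b f \<beta>) c \<xi>s \<longleftrightarrow> c_optimal p X (M_Po p f \<beta>) c \<xi>s))"
proof -
  note model = assms(1-4)
  let ?Po = "M_Po p f \<beta>" and ?PG = "M_PG p m a b f \<beta>"
  note col = same_column_space_M_Po_M_PG[OF model, where X = X]
  note col' = same_column_space_sym[OF col]
  note to_PG = g_inverse_M_PG_of_M_Po[OF model, where X = X]
    and to_Po = g_inverse_M_Po_of_M_PG[OF model, where X = X]
  have ba: "0 < b / a" and ab: "0 < a / b" using assms(3,4) by simp_all
  have "L_optimal p X ?PG A \<xi>s \<longleftrightarrow> L_optimal p X ?Po A \<xi>s"
    using L_optimal_transfer[where N = ?Po and N' = ?PG, OF assms(7) proj_e1_carrier ba col to_PG]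
      L_optimal_transfer[where N = ?PG and N' = ?Po, OF assms(7) proj_e1_carrier ab col' to_Po]
    by blast
  moreover have "c_optimal p X ?PG c \<xi>s \<longleftrightarrow> c_optimal p X ?Po c \<xi>s" if "c \<in> carrier_vec p" for c
    using c_optimal_transfer[where N = ?Po and N' = ?PG, OF that proj_e1_carrier ba col to_PG]
      c_optimal_transfer[where N = ?PG and N' = ?Po, OF that proj_e1_carrier ab col' to_Po]
    by blast
  ultimately show ?thesis by blast
qed

end
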